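(* Let $d:a\mapsto a'$ be a Hardy type series derivation on $\mathbb{K}$. Let $a\in\mathbb{K}^*$ with $a\not\asymp\hat\theta$, and set $\alpha=\mathrm{LM}(a)$. Let $\psi_\alpha\in\Phi$ be the unique fundamental monomial with $\mathrm{LF}(\alpha/\theta^{(\psi_\alpha)})=\psi_\alpha$, and put $$m=\frac{\alpha}{\mathrm{LE}\!\left(\alpha/\theta^{(\psi_\alpha)}\right)\,\mathrm{LT}\!\left(\psi_\alpha'/\psi_\alpha\right)}.$$ Then $m$ is an asymptotic integral of $\alpha$, namely $\mathrm{LT}(m')=\alpha$, and $\mathrm{LC}(a)\,m$ is an asymptotic integral of $a$, namely $\mathrm{LT}\big((\mathrm{LC}(a)m)'\big)=\mathrm{LT}(a)$. (These are denoted $\mathrm{a.i.}(\alpha)=m$ and $\mathrm{a.i.}(a)=\mathrm{LC}(a)\,\mathrm{a.i.}(\alpha)$.)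
   Context: Let $(\Phi,\preccurlyeq)$ be a totally ordered set; $\mathbf{H}(\Phi)$ is the group of formal products $\gamma=\prod_{\phi}\phi^{\gamma_\phi}$, $\gamma_\phi\in\mathbb{R}$, with anti-well-ordered support $\operatorname{supp}\gamma$, pointwise multiplication and anti-lexicographic order ($\gamma\succ1$ iff the exponent of $\max\operatorname{supp}\gamma$ is positive); $\Phi\subseteq\mathbf H(\Phi)$ via $\phi=\phi^1$. Fix a subgroup $\Gamma\supseteq\Phi$. For $1\ne\gamma$: $\mathrm{LF}(\gamma)=\max\operatorname{supp}\gamma$, $\mathrm{LE}(\gamma)=\gamma_{\mathrm{LF}(\gamma)}$. $\mathbb{K}=\mathbb{R}((\Gamma))$: formal series with anti-well-ordered support in $\Gamma$; for $a\ne0$, $\mathrm{LM}(a)$ is the largest monomial of the support, $\mathrm{LC}(a)$ its coefficient, $\mathrm{LT}(a)=\mathrm{LC}(a)\mathrm{LM}(a)$; $a\preccurlyeq b$ iff $\mathrm{LM}(a)\preccurlyeq\mathrm{LM}(b)$, $a\asymp b$ iff equal leading monomials; $|a|=\max(\mathrm{LM}(a),\mathrm{LM}(a)^{-1})$; $a,b\succ1$ comparable iff $\mathrm{LF}(\mathrm{LM}(a))=\mathrm{LF}(\mathrm{LM}(b))$. Summable families: union of supports anti-well-ordered, each monomial in finitely many supports. Series derivation: map $a\mapsto a'$ with $1'=0$, $\alpha'=\alpha\sum_{\phi\in\operatorname{supp}\alpha}\alpha_\phi\phi'/\phi$, $a'=\sum a_\alpha\alpha'$ (summable families). Hardy type: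 (HD1) constants $=\mathbb{R}$; (HD2) for $a,b\in\mathbb{K}^*$, $a,b\not\asymp1$: $a\preccurlyeq b\iff a'\preccurlyeq b'$; (HD3) for $|a|\succ|b|\succ1$: $a'/a\succcurlyeq b'/b$, with $\asymp$ iff $a,b$ comparable. $\theta^{(\phi)}=\mathrm{LM}(\phi'/\phi)$; $\hat\theta$ is the greatest lower bound of $\{\theta^{(\phi)}:\phi\in\Phi\}$ in $\Gamma$ if it exists (the condition $a\not\asymp\hat\theta$ is vacuous otherwise). For $\alpha\in\Gamma$, $\alpha\neq\hat\theta$, a unique $\psi_\alpha\in\Phi$ with $\mathrm{LF}(\alpha/\theta^{(\psi_\alpha)})=\psi_\alpha$ exists. $b$ is an asymptotic integral of $a$ if $b'\sim a$, i.e. $\mathrm{LT}(b')=\mathrm{LT}(a)$. *)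

theory Defs
  imports Main "HOL.Real"
begin

(* Fundamental monomials: elements of a linearly ordered type 'p (this is Phi).
   Elements of the Hahn group H(Phi) are represented additively by their exponent
   functions  'p => real  ; the product of monomials is pointwise addition of exponents. *)

type_synonym 'p mon = "'p \<Rightarrow> real"
type_synonym 'p ser = "'p mon \<Rightarrow> real"

definition anti_wo :: "'p::linorder set \<Rightarrow> bool" where
  "anti_wo S \<longleftrightarrow> (\<forall>T\<subseteq>S. T \<noteq> {} \<longrightarrow> (\<exists>m\<in>T. \<forall>t\<in>T. t \<le> m))"

definition msupp :: "'p mon \<Rightarrow> 'p set" where
  "msupp \<gamma> = {p. \<gamma> p \<noteq> 0}"

definition Hahn :: "'p::linorder mon set" where
  "Hahn = {\<gamma>. anti_wo (msupp \<gamma>)}"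

definition mone :: "'p mon" where "mone = (\<lambda>_. 0)"
definition mmul :: "'p mon \<Rightarrow> 'p mon \<Rightarrow> 'p mon" where "mmul \<gamma> \<delta> = (\<lambda>p. \<gamma> p + \<delta> p)"
definition mdiv :: "'p mon \<Rightarrow> 'p mon \<Rightarrow> 'p mon" where "mdiv \<gamma> \<delta> = (\<lambda>p. \<gamma> p - \<delta> p)"
definition minv :: "'p mon \<Rightarrow> 'p mon" where "minv \<gamma> = (\<lambda>p. - \<gamma> p)"

definition fund :: "'p \<Rightarrow> 'p mon" where "fund \<phi> = (\<lambda>q. if q = \<phi> then 1 else 0)"

text \<open>leading fundamental monomial and leading exponent (for gamma ~= 1)\<close>
definition LF :: "'p::linorder mon \<Rightarrow> 'p" where
  "LF \<gamma> = (THE p. \<gamma> p \<noteq> 0 \<and> (\<forall>q. \<gamma> q \<noteq> 0 \<longrightarrow> q \<le> p))"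
definition LE :: "'p::linorder mon \<Rightarrow> real" where "LE \<gamma> = \<gamma> (LF \<gamma>)"

definition mgt1 :: "'p::linorder mon \<Rightarrow> bool" where
  "mgt1 \<gamma> \<longleftrightarrow> \<gamma> \<noteq> mone \<and> LE \<gamma> > 0"
definition mle :: "'p::linorder mon \<Rightarrow> 'p mon \<Rightarrow> bool" where
  "mle \<gamma> \<delta> \<longleftrightarrow> \<gamma> = \<delta> \<or> mgt1 (mdiv \<delta> \<gamma>)"
definition mless :: "'p::linorder mon \<Rightarrow> 'p mon \<Rightarrow> bool" where
  "mless \<gamma> \<delta> \<longleftrightarrow> \<gamma> \<noteq> \<delta> \<and> mle \<gamma> \<delta>"

definition mabs :: "'p::linorder mon \<Rightarrow> 'p mon" where
  "mabs \<gamma> = (if mle mone \<gamma> then \<gamma> else minv \<gamma>)"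

definition anti_wo_m :: "'p::linorder mon set \<Rightarrow> bool" where
  "anti_wo_m S \<longleftrightarrow> (\<forall>T\<subseteq>S. T \<noteq> {} \<longrightarrow> (\<exists>m\<in>T. \<forall>t\<in>T. mle t m))"

definition value_group :: "'p::linorder mon set \<Rightarrow> bool" where
  "value_group \<Gamma> \<longleftrightarrow> \<Gamma> \<subseteq> Hahn \<and> mone \<in> \<Gamma> \<and>
     (\<forall>\<gamma>\<in>\<Gamma>. \<forall>\<delta>\<in>\<Gamma>. mdiv \<gamma> \<delta> \<in> \<Gamma>) \<and> (\<forall>\<phi>. fund \<phi> \<in> \<Gamma>)"

definition ssupp :: "'p ser \<Rightarrow> 'p mon set" where
  "ssupp a = {\<mu>. a \<mu> \<noteq> 0}"

definition KK :: "'p::linorder mon set \<Rightarrow> 'p ser set" where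
  "KK \<Gamma> = {a. ssupp a \<subseteq> \<Gamma> \<and> anti_wo_m (ssupp a)}"

definition szero :: "'p ser" where "szero = (\<lambda>_. 0)"
definition smono :: "'p mon \<Rightarrow> 'p ser" where "smono \<mu> = (\<lambda>\<nu>. if \<nu> = \<mu> then 1 else 0)"
definition sone :: "'p ser" where "sone = smono mone"
definition sscale :: "real \<Rightarrow> 'p ser \<Rightarrow> 'p ser" where "sscale c a = (\<lambda>\<nu>. c * a \<nu>)"
text \<open>product of a monomial mu with a series a\<close>
definition sshift :: "'p mon \<Rightarrow> 'p ser \<Rightarrow> 'p ser" where
  "sshift \<mu> a = (\<lambda>\<nu>. a (mdiv \<nu> \<mu>))"

definition LM :: "'p::linorder ser \<Rightarrow> 'p mon" where
  "LM a = (THE \<mu>. a \<mu> \<noteq> 0 \<and> (\<forall>\<nu>. a \<nu> \<noteq> 0 \<longrightarrow> mle \<nu> \<mu>))"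
definition LC :: "'p::linorder ser \<Rightarrow> real" where "LC a = a (LM a)"
definition LT :: "'p::linorder ser \<Rightarrow> 'p ser" where
  "LT a = (\<lambda>\<nu>. if \<nu> = LM a then LC a else 0)"

definition sle :: "'p::linorder ser \<Rightarrow> 'p ser \<Rightarrow> bool" where
  "sle a b \<longleftrightarrow> a = szero \<or> (b \<noteq> szero \<and> mle (LM a) (LM b))"

definition summable_fam :: "'i set \<Rightarrow> ('i \<Rightarrow> 'p::linorder ser) \<Rightarrow> bool" where
  "summable_fam I F \<longleftrightarrow> anti_wo_m (\<Union>i\<in>I. ssupp (F i)) \<and> (\<forall>\<nu>. finite {i\<in>I. F i \<nu> \<noteq> 0})"
definition fam_sum :: "'i set \<Rightarrow> ('i \<Rightarrow> 'p ser) \<Rightarrow> 'p ser" where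
  "fam_sum I F = (\<lambda>\<nu>. \<Sum>i\<in>{i\<in>I. F i \<nu> \<noteq> 0}. F i \<nu>)"

definition series_derivation :: "'p::linorder mon set \<Rightarrow> ('p ser \<Rightarrow> 'p ser) \<Rightarrow> bool" where
  "series_derivation \<Gamma> d \<longleftrightarrow>
     (\<forall>a\<in>KK \<Gamma>. d a \<in> KK \<Gamma>) \<and>
     d sone = szero \<and>
     (\<forall>\<alpha>\<in>\<Gamma>.
        summable_fam (msupp \<alpha>) (\<lambda>\<phi>. sscale (\<alpha> \<phi>) (sshift (minv (fund \<phi>)) (d (smono (fund \<phi>))))) \<and>
        d (smono \<alpha>) = sshift \<alpha>
          (fam_sum (msupp \<alpha>) (\<lambda>\<phi>. sscale (\<alpha> \<phi>) (sshift (minv (fund \<phi>)) (d (smono (fund \<phi>))))))) \<and>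
     (\<forall>a\<in>KK \<Gamma>.
        summable_fam (ssupp a) (\<lambda>\<alpha>. sscale (a \<alpha>) (d (smono \<alpha>))) \<and>
        d a = fam_sum (ssupp a) (\<lambda>\<alpha>. sscale (a \<alpha>) (d (smono \<alpha>))))"

text \<open>Hardy type. LM(a'/a) is written LM(a') / LM(a) (K is a valued field).\<close>
definition hardy_type :: "'p::linorder mon set \<Rightarrow> ('p ser \<Rightarrow> 'p ser) \<Rightarrow> bool" where
  "hardy_type \<Gamma> d \<longleftrightarrow>
     (\<forall>a\<in>KK \<Gamma>. d a = szero \<longleftrightarrow> (\<exists>c. a = sscale c sone)) \<and>
     (\<forall>a\<in>KK \<Gamma>. \<forall>b\<in>KK \<Gamma>. a \<noteq> szero \<and> b \<noteq> szero \<and> LM a \<noteq> mone \<and> LM b \<noteq> mone \<longrightarrow>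
        (sle a b \<longleftrightarrow> sle (d a) (d b))) \<and>
     (\<forall>a\<in>KK \<Gamma>. \<forall>b\<in>KK \<Gamma>. a \<noteq> szero \<and> b \<noteq> szero \<and>
        mless (mabs (LM b)) (mabs (LM a)) \<and> mless mone (mabs (LM b)) \<longrightarrow>
        mle (mdiv (LM (d b)) (LM b)) (mdiv (LM (d a)) (LM a)) \<and>
        (mdiv (LM (d a)) (LM a) = mdiv (LM (d b)) (LM b) \<longleftrightarrow> LF (LM a) = LF (LM b)))"

definition hardy_series_derivation :: "'p::linorder mon set \<Rightarrow> ('p ser \<Rightarrow> 'p ser) \<Rightarrow> bool" where
  "hardy_series_derivation \<Gamma> d \<longleftrightarrow> series_derivation \<Gamma> d \<and> hardy_type \<Gamma> d"

definition theta :: "('p::linorder ser \<Rightarrow> 'p ser) \<Rightarrow> 'p \<Rightarrow> 'p mon" where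
  "theta d \<phi> = mdiv (LM (d (smono (fund \<phi>)))) (fund \<phi>)"

definition is_theta_hat :: "'p::linorder mon set \<Rightarrow> ('p ser \<Rightarrow> 'p ser) \<Rightarrow> 'p mon \<Rightarrow> bool" where
  "is_theta_hat \<Gamma> d t \<longleftrightarrow> t \<in> \<Gamma> \<and> (\<forall>\<phi>. mle t (theta d \<phi>)) \<and>
     (\<forall>s\<in>\<Gamma>. (\<forall>\<phi>. mle s (theta d \<phi>)) \<longrightarrow> mle s t)"

definition psi :: "('p::linorder ser \<Rightarrow> 'p ser) \<Rightarrow> 'p mon \<Rightarrow> 'p" where
  "psi d \<alpha> = (THE \<psi>. mdiv \<alpha> (theta d \<psi>) \<noteq> mone \<and> LF (mdiv \<alpha> (theta d \<psi>)) = \<psi>)"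

text \<open>m = alpha / (LE(alpha/theta^(psi)) * LT(psi'/psi)), a single term\<close>
definition ai_mon :: "('p::linorder ser \<Rightarrow> 'p ser) \<Rightarrow> 'p mon \<Rightarrow> 'p ser" where
  "ai_mon d \<alpha> = (let \<psi> = psi d \<alpha>; l = d (smono (fund \<psi>)) in
     sscale (1 / (LE (mdiv \<alpha> (theta d \<psi>)) * LC l))
       (smono (mdiv \<alpha> (mdiv (LM l) (fund \<psi>)))))"

end

theory Submission
  imports Defs
begin

text \<open>
  Write \<open>\<theta>\<^sub>\<phi>\<close> for \<open>theta d \<phi>\<close>. For a monomial \<open>\<mu> \<noteq> 1\<close> with \<open>\<phi> = LF \<mu>\<close>, the
  series-derivation formula expresses \<open>\<mu>'\<close> as \<open>\<mu> \<Sum>\<^sub>\<chi> \<mu>\<^sub>\<chi> \<chi>'/\<chi>\<close>; since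
  \<open>\<chi> \<mapsto> \<theta>\<^sub>\<chi>\<close> is strictly increasing (HD3), only the term \<open>\<chi> = \<phi>\<close> reaches the
  leading monomial, so \<open>LT(\<mu>') = LE(\<mu>) LC(\<phi>') \<mu> \<theta>\<^sub>\<phi>\<close>. For \<open>\<mu> = \<alpha>/\<theta>\<^sub>\<psi>\<close> with
  \<open>\<psi> = \<psi>\<^sub>\<alpha> = LF \<mu>\<close> this is \<open>LE(\<mu>) LC(\<psi>') \<alpha>\<close>, and dividing by the constant gives
  the asymptotic integral.

  The work lies in \<open>\<psi>\<^sub>\<alpha>\<close>. Comparing \<open>q\<^sup>-\<^sup>1 \<preceq> p\<^sup>-\<^sup>1\<close> via HD2 shows
  \<open>LF(\<theta>\<^sub>q/\<theta>\<^sub>p) < q\<close> for \<open>p < q\<close>, so \<open>\<alpha>/\<theta>\<^sub>p\<close> and \<open>\<alpha>/\<theta>\<^sub>q\<close> have the same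
  exponents from \<open>q\<close> upwards. This makes \<open>\<psi>\<^sub>\<alpha>\<close> unique; and if it does not exist,
  every \<open>\<alpha>/\<theta>\<^sub>p\<close> is \<open>\<preceq> 1\<close> with vanishing exponents at all \<open>r \<ge> p\<close>, which
  makes \<open>\<alpha>\<close> the greatest lower bound of the \<open>\<theta>\<^sub>p\<close>.
\<close>

section \<open>The ordered group of monomials\<close>

lemma mone_eq_iff: "\<gamma> = mone \<longleftrightarrow> (\<forall>p. \<gamma> p = 0)"
  unfolding mone_def by auto

lemma mdiv_eq_mone_iff: "mdiv x y = mone \<longleftrightarrow> x = y"
  unfolding mdiv_def mone_def by (auto simp: fun_eq_iff)

lemma minv_eq_mone_iff: "minv \<gamma> = mone \<longleftrightarrow> \<gamma> = mone"
  unfolding minv_def mone_def by (auto simp: fun_eq_iff)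

lemma minv_mdiv: "minv (mdiv x y) = mdiv y x"
  unfolding mdiv_def minv_def by auto

lemma mdiv_mone_right: "mdiv x mone = x"
  unfolding mdiv_def mone_def by auto

lemma mdiv_eq_mmul_mdiv: "mdiv x z = mmul (mdiv x y) (mdiv y z)"
  unfolding mdiv_def mmul_def by auto

lemma mmul_commute: "mmul x y = mmul y x"
  unfolding mmul_def by auto

lemma mdiv_minv_minv: "mdiv (minv x) (minv y) = mdiv y x"
  unfolding mdiv_def minv_def by auto

lemma mmul_mdiv_cancel: "mmul (mdiv x y) y = x"
  unfolding mdiv_def mmul_def by auto

lemma LF_eqI: "\<gamma> p \<noteq> 0 \<Longrightarrow> (\<And>q. \<gamma> q \<noteq> 0 \<Longrightarrow> q \<le> p) \<Longrightarrow> LF \<gamma> = p"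
  unfolding LF_def by (rule the_equality) (auto intro: antisym)

lemma
  assumes "\<gamma> \<in> Hahn" "\<gamma> \<noteq> mone"
  shows LF_nonzero: "\<gamma> (LF \<gamma>) \<noteq> 0"
    and le_LF: "\<gamma> q \<noteq> 0 \<Longrightarrow> q \<le> LF \<gamma>"
proof -
  have "msupp \<gamma> \<noteq> {}" using assms(2) by (auto simp: mone_eq_iff msupp_def)
  then obtain m where m: "m \<in> msupp \<gamma>" "\<forall>t\<in>msupp \<gamma>. t \<le> m"
    using assms(1) unfolding Hahn_def anti_wo_def by blast
  hence "LF \<gamma> = m" by (intro LF_eqI) (auto simp: msupp_def)
  thus "\<gamma> (LF \<gamma>) \<noteq> 0" "\<gamma> q \<noteq> 0 \<Longrightarrow> q \<le> LF \<gamma>" using m by (auto simp: msupp_def)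
qed

lemma LF_minv: "LF (minv \<gamma>) = LF \<gamma>"
  unfolding LF_def minv_def by simp

lemma LE_minv: "LE (minv \<gamma>) = - LE \<gamma>"
  unfolding LE_def LF_minv by (simp add: minv_def)

lemma fund_ne_mone: "fund p \<noteq> mone"
  by (auto simp: fund_def mone_eq_iff)

lemma LF_fund: "LF (fund p) = p"
  by (rule LF_eqI) (auto simp: fund_def split: if_splits)

lemma mgt1I:
  assumes "\<gamma> z > 0" "\<And>s. \<gamma> s \<noteq> 0 \<Longrightarrow> s \<le> z"
  shows "mgt1 \<gamma>"
proof -
  have "LF \<gamma> = z" using assms by (intro LF_eqI) auto
  moreover have "\<gamma> \<noteq> mone" using assms(1) by (auto simp: mone_def)
  ultimately show ?thesis using assms(1) unfolding mgt1_def LE_def by simp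
qed

lemma mgt1_fund: "mgt1 (fund p)"
  by (rule mgt1I[where z = p]) (auto simp: fund_def split: if_splits)

lemma mgt1_minv: "mgt1 \<gamma> \<Longrightarrow> \<not> mgt1 (minv \<gamma>)"
  unfolding mgt1_def LE_minv by auto

lemma mgt1_or_mgt1_minv:
  assumes "\<gamma> \<in> Hahn" "\<gamma> \<noteq> mone"
  shows "mgt1 \<gamma> \<or> mgt1 (minv \<gamma>)"
proof -
  have "LE \<gamma> \<noteq> 0" using LF_nonzero[OF assms] by (simp add: LE_def)
  thus ?thesis using assms unfolding mgt1_def LE_minv by (auto simp: minv_eq_mone_iff)
qed

lemma mgt1_coeff_nonneg:
  assumes "\<gamma> \<in> Hahn" "mgt1 \<gamma>" "LF \<gamma> \<le> s"
  shows "\<gamma> s \<ge> 0"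
proof (cases "s = LF \<gamma>")
  case False
  hence "\<not> s \<le> LF \<gamma>" using assms(3) by simp
  moreover have "\<gamma> \<noteq> mone" using assms(2) by (simp add: mgt1_def)
  ultimately have "\<gamma> s = 0" using le_LF[OF assms(1)] by blast
  thus ?thesis by simp
qed (use assms(2) in \<open>simp add: mgt1_def LE_def\<close>)

lemma
  assumes "a \<in> Hahn" "b \<in> Hahn" "mgt1 a" "mgt1 b"
  shows mgt1_mmul: "mgt1 (mmul a b)"
    and LF_mmul_mgt1: "LF (mmul a b) = max (LF a) (LF b)"
proof -
  define z where "z = max (LF a) (LF b)"
  have ne: "a \<noteq> mone" "b \<noteq> mone" using assms(3,4) by (auto simp: mgt1_def)
  have "a z \<ge> 0" using mgt1_coeff_nonneg[OF assms(1,3), of z] unfolding z_def by simp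
  moreover have "b z \<ge> 0" using mgt1_coeff_nonneg[OF assms(2,4), of z] unfolding z_def by simp
  moreover have "a z > 0 \<or> b z > 0"
  proof (cases "LF a \<le> LF b")
    case True
    thus ?thesis using assms(4) unfolding z_def mgt1_def LE_def by (simp add: max_absorb2)
  next
    case False
    thus ?thesis using assms(3) unfolding z_def mgt1_def LE_def by (simp add: max_absorb1)
  qed
  ultimately have pos: "mmul a b z > 0" unfolding mmul_def by linarith
  have le: "s \<le> z" if "mmul a b s \<noteq> 0" for s
  proof -
    have "a s \<noteq> 0 \<or> b s \<noteq> 0" using that by (auto simp: mmul_def)
    hence "s \<le> LF a \<or> s \<le> LF b" using le_LF[OF assms(1) ne(1)] le_LF[OF assms(2) ne(2)] by blast
    thus ?thesis unfolding z_def by (simp add: le_max_iff_disj)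
  qed
  show "mgt1 (mmul a b)" by (rule mgt1I[where \<gamma> = "mmul a b", OF pos le])
  show "LF (mmul a b) = max (LF a) (LF b)"
    unfolding z_def[symmetric] by (rule LF_eqI[OF _ le]) (use pos in simp)
qed

lemma mle_refl: "mle x x"
  unfolding mle_def by simp

lemma mle_antisym: "mle x y \<Longrightarrow> mle y x \<Longrightarrow> x = y"
  unfolding mle_def using mgt1_minv minv_mdiv by metis

lemma mle_imp_not_mgt1: "mle x y \<Longrightarrow> \<not> mgt1 (mdiv x y)"
  unfolding mle_def using mgt1_minv minv_mdiv mdiv_eq_mone_iff mgt1_def by metis

lemma mle_mmul_cancel: "mle (mmul x c) (mmul y c) \<longleftrightarrow> mle x y"
proof -
  have "mdiv (mmul y c) (mmul x c) = mdiv y x" by (auto simp: mdiv_def mmul_def)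
  moreover have "mmul x c = mmul y c \<longleftrightarrow> x = y" by (auto simp: mmul_def fun_eq_iff)
  ultimately show ?thesis unfolding mle_def by simp
qed

lemma fund_mless:
  assumes "p < q"
  shows "mless (fund p) (fund q)"
proof -
  have "mgt1 (mdiv (fund q) (fund p))"
    using assms by (intro mgt1I[where z = q]) (auto simp: mdiv_def fund_def split: if_splits)
  moreover have "fund p \<noteq> fund q" using assms by (auto simp: fund_def fun_eq_iff)
  ultimately show ?thesis unfolding mless_def mle_def by simp
qed

lemma mless_mone_fund: "mless mone (fund p)"
  unfolding mless_def mle_def mdiv_mone_right using mgt1_fund fund_ne_mone by metis

lemma mabs_fund: "mabs (fund p) = fund p"
  unfolding mabs_def mle_def mdiv_mone_right by (simp add: mgt1_fund)

lemma value_group_Hahn: "value_group \<Gamma> \<Longrightarrow> x \<in> \<Gamma> \<Longrightarrow> x \<in> Hahn"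
  unfolding value_group_def by auto

lemma value_group_mdiv: "value_group \<Gamma> \<Longrightarrow> x \<in> \<Gamma> \<Longrightarrow> y \<in> \<Gamma> \<Longrightarrow> mdiv x y \<in> \<Gamma>"
  unfolding value_group_def by blast

lemma value_group_fund: "value_group \<Gamma> \<Longrightarrow> fund p \<in> \<Gamma>"
  unfolding value_group_def by auto

lemma value_group_minv: "value_group \<Gamma> \<Longrightarrow> x \<in> \<Gamma> \<Longrightarrow> minv x \<in> \<Gamma>"
  using value_group_mdiv[of \<Gamma> mone x] unfolding value_group_def
  by (simp add: minv_def mdiv_def mone_def)

lemma mle_trans:
  assumes "value_group \<Gamma>" "x \<in> \<Gamma>" "y \<in> \<Gamma>" "z \<in> \<Gamma>" "mle x y" "mle y z"
  shows "mle x z"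
proof (cases "x = y \<or> y = z")
  case False
  hence "mgt1 (mdiv z y)" "mgt1 (mdiv y x)" using assms(5,6) unfolding mle_def by auto
  moreover have "mdiv z y \<in> Hahn" "mdiv y x \<in> Hahn"
    using assms(1-4) value_group_mdiv value_group_Hahn by blast+
  ultimately have "mgt1 (mmul (mdiv z y) (mdiv y x))" by (intro mgt1_mmul)
  thus ?thesis unfolding mle_def mdiv_eq_mmul_mdiv[of z x y] by simp
qed (use assms(5,6) in auto)

lemma mle_total:
  assumes "value_group \<Gamma>" "x \<in> \<Gamma>" "y \<in> \<Gamma>"
  shows "mle x y \<or> mle y x"
proof (cases "x = y")
  case False
  have "mdiv y x \<in> Hahn" using assms value_group_mdiv value_group_Hahn by blast
  moreover have "mdiv y x \<noteq> mone" using False mdiv_eq_mone_iff by metis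
  ultimately have "mgt1 (mdiv y x) \<or> mgt1 (mdiv x y)"
    using mgt1_or_mgt1_minv[of "mdiv y x"] by (simp add: minv_mdiv)
  thus ?thesis unfolding mle_def by blast
qed (simp add: mle_refl)

section \<open>Leading terms of series\<close>

lemma szero_eq_iff: "a = szero \<longleftrightarrow> (\<forall>\<nu>. a \<nu> = 0)"
  unfolding szero_def by auto

lemma LM_eqI:
  assumes "a \<mu> \<noteq> 0" "\<And>\<nu>. a \<nu> \<noteq> 0 \<Longrightarrow> mle \<nu> \<mu>"
  shows "LM a = \<mu>"
  unfolding LM_def by (rule the_equality) (use assms mle_antisym in blast)+

lemma
  assumes "a \<in> KK \<Gamma>" "a \<noteq> szero"
  shows LM_nonzero: "a (LM a) \<noteq> 0"
    and le_LM: "a \<nu> \<noteq> 0 \<Longrightarrow> mle \<nu> (LM a)"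
    and LM_in_group: "LM a \<in> \<Gamma>"
proof -
  have "ssupp a \<noteq> {}" using assms(2) by (auto simp: szero_eq_iff ssupp_def)
  then obtain m where m: "m \<in> ssupp a" "\<forall>t\<in>ssupp a. mle t m"
    using assms(1) unfolding KK_def anti_wo_m_def by blast
  hence "LM a = m" by (intro LM_eqI) (auto simp: ssupp_def)
  thus "a (LM a) \<noteq> 0" "a \<nu> \<noteq> 0 \<Longrightarrow> mle \<nu> (LM a)" "LM a \<in> \<Gamma>"
    using m assms(1) by (auto simp: ssupp_def KK_def)
qed

lemma LM_sscale: "k \<noteq> 0 \<Longrightarrow> LM (sscale k a) = LM a"
  unfolding LM_def sscale_def by simp

lemma LT_sscale: "k \<noteq> 0 \<Longrightarrow> LT (sscale k a) = sscale k (LT a)"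
  unfolding LT_def LC_def LM_sscale by (auto simp: sscale_def)

lemma LT_eq_sscale_smono: "LT a = sscale (LC a) (smono (LM a))"
  unfolding LT_def sscale_def smono_def by auto

lemma sscale_one: "sscale 1 a = a"
  unfolding sscale_def by simp

lemma sscale_sscale: "sscale k (sscale c a) = sscale (k * c) a"
  unfolding sscale_def by auto

lemma smono_ne_szero: "smono \<mu> \<noteq> szero"
  unfolding szero_eq_iff smono_def by (metis one_neq_zero)

lemma LM_smono: "LM (smono \<mu>) = \<mu>"
  by (rule LM_eqI) (auto simp: smono_def mle_refl split: if_splits)

lemma smono_in_KK:
  assumes "\<mu> \<in> \<Gamma>"
  shows "smono \<mu> \<in> KK \<Gamma>"
proof -
  have "ssupp (smono \<mu>) = {\<mu>}" by (auto simp: ssupp_def smono_def)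
  moreover have "anti_wo_m {\<mu>}"
    unfolding anti_wo_m_def by (auto simp: mle_refl subset_singleton_iff)
  ultimately show ?thesis using assms unfolding KK_def by simp
qed

lemma sscale_smono_in_KK: "\<mu> \<in> \<Gamma> \<Longrightarrow> sscale c (smono \<mu>) \<in> KK \<Gamma>"
  using smono_in_KK[of \<mu> \<Gamma>] unfolding KK_def ssupp_def sscale_def
  by (auto elim!: anti_wo_m_def[THEN iffD1, rule_format] intro!: anti_wo_m_def[THEN iffD2])

lemma sle_smono_iff: "sle (smono \<mu>) (smono \<nu>) \<longleftrightarrow> mle \<mu> \<nu>"
  unfolding sle_def LM_smono by (simp add: smono_ne_szero)

lemma fam_sum_singleton: "fam_sum {i} F = F i"
proof
  fix \<nu>
  show "fam_sum {i} F \<nu> = F i \<nu>"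
  proof (cases "F i \<nu> = 0")
    case False
    hence "{j \<in> {i}. F j \<nu> \<noteq> 0} = {i}" by blast
    thus ?thesis by (simp add: fam_sum_def)
  qed (simp add: fam_sum_def)
qed

lemma fam_sum_eq_single: "{i\<in>I. F i \<nu> \<noteq> 0} = {j} \<Longrightarrow> fam_sum I F \<nu> = F j \<nu>"
  unfolding fam_sum_def by simp

lemma fam_sum_nonzero_imp: "fam_sum I F \<nu> \<noteq> 0 \<Longrightarrow> \<exists>i\<in>I. F i \<nu> \<noteq> 0"
  unfolding fam_sum_def by (metis (mono_tags, lifting) empty_Collect_eq sum.empty)

section \<open>Derivatives of monomials\<close>

locale hardy_derivation =
  fixes \<Gamma> :: "'p::linorder mon set" and d :: "'p ser \<Rightarrow> 'p ser"
  assumes value_group: "value_group \<Gamma>"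
    and hardy: "hardy_series_derivation \<Gamma> d"
begin

lemma series_derivation: "series_derivation \<Gamma> d"
  and hardy_type: "hardy_type \<Gamma> d"
  using hardy unfolding hardy_series_derivation_def by simp_all

lemmas series_derivation_conds = series_derivation[unfolded series_derivation_def]
lemmas hardy_type_conds = hardy_type[unfolded hardy_type_def]

lemma d_in_KK: "a \<in> KK \<Gamma> \<Longrightarrow> d a \<in> KK \<Gamma>"
  using series_derivation_conds[THEN conjunct1] by (rule bspec)

lemma d_smono: "\<mu> \<in> \<Gamma> \<Longrightarrow> d (smono \<mu>) = sshift \<mu>
    (fam_sum (msupp \<mu>) (\<lambda>\<phi>. sscale (\<mu> \<phi>) (sshift (minv (fund \<phi>)) (d (smono (fund \<phi>))))))"
  using series_derivation_conds[THEN conjunct2, THEN conjunct2, THEN conjunct1, rule_format,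
      THEN conjunct2] .

lemma d_eq_fam_sum: "a \<in> KK \<Gamma> \<Longrightarrow> d a = fam_sum (ssupp a) (\<lambda>\<alpha>. sscale (a \<alpha>) (d (smono \<alpha>)))"
  using series_derivation_conds[THEN conjunct2, THEN conjunct2, THEN conjunct2, rule_format,
      THEN conjunct2] .

lemma d_eq_szero_iff: "a \<in> KK \<Gamma> \<Longrightarrow> d a = szero \<longleftrightarrow> (\<exists>c. a = sscale c sone)"
  using hardy_type_conds[THEN conjunct1, rule_format] .

lemma sle_iff_sle_d:
  "\<lbrakk>a \<in> KK \<Gamma>; b \<in> KK \<Gamma>; a \<noteq> szero; b \<noteq> szero; LM a \<noteq> mone; LM b \<noteq> mone\<rbrakk>
    \<Longrightarrow> sle a b \<longleftrightarrow> sle (d a) (d b)"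
  using hardy_type_conds[THEN conjunct2, THEN conjunct1, rule_format] by simp

lemma log_derivative_mle:
  "\<lbrakk>a \<in> KK \<Gamma>; b \<in> KK \<Gamma>; a \<noteq> szero; b \<noteq> szero;
    mless (mabs (LM b)) (mabs (LM a)); mless mone (mabs (LM b))\<rbrakk>
    \<Longrightarrow> mle (mdiv (LM (d b)) (LM b)) (mdiv (LM (d a)) (LM a)) \<and>
        (mdiv (LM (d a)) (LM a) = mdiv (LM (d b)) (LM b) \<longleftrightarrow> LF (LM a) = LF (LM b))"
  using hardy_type_conds[THEN conjunct2, THEN conjunct2, rule_format] by simp

lemma d_sscale_smono:
  assumes "\<mu> \<in> \<Gamma>"
  shows "d (sscale c (smono \<mu>)) = sscale c (d (smono \<mu>))"
proof (cases "c = 0")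
  case True
  have "ssupp (sscale 0 (smono \<mu>)) = {}" by (simp add: ssupp_def sscale_def)
  hence "d (sscale 0 (smono \<mu>)) = szero"
    using d_eq_fam_sum[OF sscale_smono_in_KK[OF assms], of 0] by (simp add: fam_sum_def szero_def)
  thus ?thesis unfolding True by (simp add: sscale_def szero_def)
next
  case False
  hence "ssupp (sscale c (smono \<mu>)) = {\<mu>}" by (auto simp: ssupp_def sscale_def smono_def)
  thus ?thesis using d_eq_fam_sum[OF sscale_smono_in_KK[OF assms]]
    by (simp add: fam_sum_singleton sscale_def smono_def)
qed

lemma d_smono_apply:
  assumes "\<mu> \<in> \<Gamma>"
  shows "d (smono \<mu>) \<nu> = fam_sum (msupp \<mu>)
           (\<lambda>\<phi> \<kappa>. \<mu> \<phi> * d (smono (fund \<phi>)) (mmul \<kappa> (fund \<phi>))) (mdiv \<nu> \<mu>)"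
proof -
  have shift: "mdiv \<kappa> (minv (fund \<phi>)) = mmul \<kappa> (fund \<phi>)" for \<kappa> \<phi>
    by (auto simp: mdiv_def minv_def mmul_def)
  show ?thesis unfolding d_smono[OF assms] by (simp add: sshift_def sscale_def shift)
qed

lemma smono_fund_in_KK: "smono (fund p) \<in> KK \<Gamma>"
  using smono_in_KK value_group_fund[OF value_group] .

lemma d_smono_fund_in_KK: "d (smono (fund p)) \<in> KK \<Gamma>"
  using d_in_KK smono_fund_in_KK .

lemma d_smono_fund_ne_szero: "d (smono (fund p)) \<noteq> szero"
proof
  assume "d (smono (fund p)) = szero"
  then obtain c where c: "smono (fund p) = sscale c sone"
    using d_eq_szero_iff smono_fund_in_KK by blast
  have "c = smono (fund p) mone" using c by (simp add: sscale_def sone_def smono_def)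
  hence "c = 0" using fund_ne_mone[of p] by (auto simp: smono_def)
  thus False using fun_cong[OF c, of "fund p"] by (simp add: sscale_def smono_def)
qed

lemma LC_d_smono_fund_ne_zero: "LC (d (smono (fund p))) \<noteq> 0"
  unfolding LC_def using LM_nonzero[OF d_smono_fund_in_KK d_smono_fund_ne_szero] .

lemma theta_in_group: "theta d p \<in> \<Gamma>"
  unfolding theta_def
  using value_group_mdiv[OF value_group LM_in_group[OF d_smono_fund_in_KK d_smono_fund_ne_szero]
      value_group_fund[OF value_group]] .

lemma LM_d_smono_fund: "LM (d (smono (fund p))) = mmul (theta d p) (fund p)"
  unfolding theta_def by (rule mmul_mdiv_cancel[symmetric])

lemma mle_theta_if_d_smono_fund_nonzero:
  "d (smono (fund p)) (mmul \<kappa> (fund p)) \<noteq> 0 \<Longrightarrow> mle \<kappa> (theta d p)"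
  using le_LM[OF d_smono_fund_in_KK d_smono_fund_ne_szero, of p "mmul \<kappa> (fund p)"]
  unfolding LM_d_smono_fund mle_mmul_cancel .

lemma theta_strict_mono: "p < q \<Longrightarrow> mgt1 (mdiv (theta d q) (theta d p))"
proof -
  assume pq: "p < q"
  have "mless (mabs (LM (smono (fund p)))) (mabs (LM (smono (fund q))))"
    "mless mone (mabs (LM (smono (fund p))))"
    unfolding LM_smono mabs_fund using fund_mless[OF pq] mless_mone_fund by auto
  from log_derivative_mle[OF smono_fund_in_KK smono_fund_in_KK smono_ne_szero smono_ne_szero this]
  have "mle (theta d p) (theta d q)" "theta d p \<noteq> theta d q"
    unfolding LM_smono LF_fund theta_def using pq by auto
  thus ?thesis unfolding mle_def by simp
qed

lemma theta_mono: "p \<le> q \<Longrightarrow> mle (theta d p) (theta d q)"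
  using theta_strict_mono mle_refl unfolding mle_def by (cases "p = q") auto

lemma d_smono_support_le:
  assumes "\<mu> \<in> \<Gamma>" "\<mu> \<noteq> mone" and nz: "d (smono \<mu>) \<nu> \<noteq> 0"
  shows "mle \<nu> (mmul \<mu> (theta d (LF \<mu>)))"
proof -
  have "d (smono \<mu>) \<in> KK \<Gamma>" using d_in_KK smono_in_KK assms(1) by blast
  hence \<nu>: "\<nu> \<in> \<Gamma>" using nz unfolding KK_def ssupp_def by blast
  obtain \<phi> where \<phi>: "\<phi> \<in> msupp \<mu>" "d (smono (fund \<phi>)) (mmul (mdiv \<nu> \<mu>) (fund \<phi>)) \<noteq> 0"
    using fam_sum_nonzero_imp nz unfolding d_smono_apply[OF assms(1)] by fastforce
  have "mle (mdiv \<nu> \<mu>) (theta d \<phi>)" using mle_theta_if_d_smono_fund_nonzero \<phi>(2) .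
  moreover have "mle (theta d \<phi>) (theta d (LF \<mu>))"
    using theta_mono le_LF[OF value_group_Hahn[OF value_group assms(1)] assms(2)] \<phi>(1)
    by (simp add: msupp_def)
  ultimately have "mle (mdiv \<nu> \<mu>) (theta d (LF \<mu>))"
    using mle_trans[OF value_group value_group_mdiv[OF value_group \<nu> assms(1)] theta_in_group
        theta_in_group] by blast
  hence "mle (mmul (mdiv \<nu> \<mu>) \<mu>) (mmul (theta d (LF \<mu>)) \<mu>)"
    unfolding mle_mmul_cancel .
  thus ?thesis unfolding mmul_mdiv_cancel mmul_commute[of "theta d (LF \<mu>)" \<mu>] .
qed

lemma d_smono_leading_coeff:
  assumes "\<mu> \<in> \<Gamma>" "\<mu> \<noteq> mone"
  shows "d (smono \<mu>) (mmul \<mu> (theta d (LF \<mu>))) = LE \<mu> * LC (d (smono (fund (LF \<mu>))))"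
proof -
  define F where "F = (\<lambda>\<phi> \<kappa>. \<mu> \<phi> * d (smono (fund \<phi>)) (mmul \<kappa> (fund \<phi>)))"
  have \<mu>H: "\<mu> \<in> Hahn" using value_group_Hahn[OF value_group assms(1)] .
  have "{\<phi> \<in> msupp \<mu>. F \<phi> (theta d (LF \<mu>)) \<noteq> 0} = {LF \<mu>}"
  proof (intro equalityI subsetI)
    fix \<phi> assume "\<phi> \<in> {\<phi> \<in> msupp \<mu>. F \<phi> (theta d (LF \<mu>)) \<noteq> 0}"
    hence "\<phi> \<le> LF \<mu>" "mle (theta d (LF \<mu>)) (theta d \<phi>)"
      using le_LF[OF \<mu>H assms(2)] mle_theta_if_d_smono_fund_nonzero
      by (auto simp: msupp_def F_def)
    thus "\<phi> \<in> {LF \<mu>}"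
      using theta_strict_mono mle_imp_not_mgt1 by (metis le_neq_trans singletonI)
  next
    show "\<phi> \<in> {\<phi> \<in> msupp \<mu>. F \<phi> (theta d (LF \<mu>)) \<noteq> 0}" if "\<phi> \<in> {LF \<mu>}" for \<phi>
      using that LF_nonzero[OF \<mu>H assms(2)] LM_nonzero[OF d_smono_fund_in_KK d_smono_fund_ne_szero]
      by (simp add: msupp_def F_def LM_d_smono_fund)
  qed
  moreover have "mdiv (mmul \<mu> (theta d (LF \<mu>))) \<mu> = theta d (LF \<mu>)"
    by (auto simp: mdiv_def mmul_def)
  ultimately show ?thesis
    unfolding d_smono_apply[OF assms(1)] F_def[symmetric]
    by (simp add: fam_sum_eq_single F_def LE_def LC_def LM_d_smono_fund)
qed

lemma
  assumes "\<mu> \<in> \<Gamma>" "\<mu> \<noteq> mone"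
  shows LM_d_smono: "LM (d (smono \<mu>)) = mmul \<mu> (theta d (LF \<mu>))"
    and LT_d_smono: "LT (d (smono \<mu>)) =
      sscale (LE \<mu> * LC (d (smono (fund (LF \<mu>))))) (smono (mmul \<mu> (theta d (LF \<mu>))))"
    and d_smono_ne_szero: "d (smono \<mu>) \<noteq> szero"
proof -
  have "LE \<mu> \<noteq> 0"
    using LF_nonzero[OF value_group_Hahn[OF value_group assms(1)] assms(2)] by (simp add: LE_def)
  hence nz: "d (smono \<mu>) (mmul \<mu> (theta d (LF \<mu>))) \<noteq> 0"
    unfolding d_smono_leading_coeff[OF assms] using LC_d_smono_fund_ne_zero by simp
  show LM: "LM (d (smono \<mu>)) = mmul \<mu> (theta d (LF \<mu>))"
    using LM_eqI[where a = "d (smono \<mu>)", OF nz d_smono_support_le[OF assms]] .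
  show "LT (d (smono \<mu>)) =
      sscale (LE \<mu> * LC (d (smono (fund (LF \<mu>))))) (smono (mmul \<mu> (theta d (LF \<mu>))))"
    unfolding LT_eq_sscale_smono[of "d (smono \<mu>)"] LC_def LM d_smono_leading_coeff[OF assms] ..
  show "d (smono \<mu>) \<noteq> szero" using nz by (auto simp: szero_def)
qed

lemma mmul_theta_LF_mono:
  assumes "\<mu> \<in> \<Gamma>" "\<nu> \<in> \<Gamma>" "\<mu> \<noteq> mone" "\<nu> \<noteq> mone" "mle \<mu> \<nu>"
  shows "mle (mmul \<mu> (theta d (LF \<mu>))) (mmul \<nu> (theta d (LF \<nu>)))"
proof -
  have "sle (d (smono \<mu>)) (d (smono \<nu>))"
    using sle_iff_sle_d[OF smono_in_KK[OF assms(1)] smono_in_KK[OF assms(2)] smono_ne_szero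
        smono_ne_szero] assms(3-5)
    by (simp add: LM_smono sle_smono_iff)
  thus ?thesis
    unfolding sle_def LM_d_smono[OF assms(1,3)] LM_d_smono[OF assms(2,4)]
    using d_smono_ne_szero[OF assms(1,3)] by blast
qed

lemma LF_theta_ratio_le:
  assumes pq: "p < q"
  shows "LF (mdiv (theta d q) (theta d p)) \<le> q"
proof (rule ccontr)
  define \<gamma> where "\<gamma> = mdiv (theta d q) (theta d p)"
  assume "\<not> LF (mdiv (theta d q) (theta d p)) \<le> q"
  hence less: "q < LF \<gamma>" unfolding \<gamma>_def by simp
  have \<gamma>: "\<gamma> \<in> Hahn" "mgt1 \<gamma>" "\<gamma> \<noteq> mone"
    using value_group_Hahn[OF value_group value_group_mdiv[OF value_group theta_in_group theta_in_group]]
      theta_strict_mono[OF pq] unfolding \<gamma>_def mgt1_def by auto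
  have fund_minv: "minv (fund r) \<in> \<Gamma>" "minv (fund r) \<noteq> mone" "LF (minv (fund r)) = r" for r
    using value_group_minv[OF value_group value_group_fund[OF value_group]] fund_ne_mone[of r]
    by (auto simp: minv_eq_mone_iff LF_minv LF_fund)
  have "mle (minv (fund q)) (minv (fund p))"
    using fund_mless[OF pq] unfolding mless_def mle_def mdiv_minv_minv by auto
  from mmul_theta_LF_mono[OF fund_minv(1,1,2,2) this]
  have "mle (mmul (minv (fund q)) (theta d q)) (mmul (minv (fund p)) (theta d p))"
    unfolding fund_minv(3) .
  moreover have "mgt1 (mdiv (mmul (minv (fund q)) (theta d q)) (mmul (minv (fund p)) (theta d p)))"
  proof (rule mgt1I[where z = "LF \<gamma>"])
    have "fund q (LF \<gamma>) = 0" "fund p (LF \<gamma>) = 0" using less pq by (auto simp: fund_def)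
    thus "mdiv (mmul (minv (fund q)) (theta d q)) (mmul (minv (fund p)) (theta d p)) (LF \<gamma>) > 0"
      using \<gamma>(2) unfolding \<gamma>_def mgt1_def LE_def by (simp add: mdiv_def mmul_def minv_def)
  next
    fix s assume "mdiv (mmul (minv (fund q)) (theta d q)) (mmul (minv (fund p)) (theta d p)) s \<noteq> 0"
    hence "s = q \<or> s = p \<or> \<gamma> s \<noteq> 0"
      unfolding \<gamma>_def by (auto simp: mdiv_def mmul_def minv_def fund_def split: if_splits)
    thus "s \<le> LF \<gamma>" using le_LF[OF \<gamma>(1,3)] less pq by auto
  qed
  ultimately show False using mle_imp_not_mgt1 by blast
qed

lemma LF_theta_ratio_ne:
  assumes pq: "p < q"
  shows "LF (mdiv (theta d q) (theta d p)) \<noteq> q"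
proof
  define \<gamma> where "\<gamma> = mdiv (theta d q) (theta d p)"
  assume "LF (mdiv (theta d q) (theta d p)) = q"
  hence LF\<gamma>: "LF \<gamma> = q" unfolding \<gamma>_def .
  have \<gamma>: "\<gamma> \<in> \<Gamma>" "\<gamma> \<in> Hahn" "mgt1 \<gamma>" "\<gamma> \<noteq> mone"
    using value_group_mdiv[OF value_group theta_in_group theta_in_group] value_group_Hahn[OF value_group]
      theta_strict_mono[OF pq] unfolding \<gamma>_def mgt1_def by auto
  have "mgt1 (mdiv \<gamma> (fund p))"
  proof (rule mgt1I[where z = q])
    show "mdiv \<gamma> (fund p) q > 0"
      using \<gamma>(3) LF\<gamma> pq unfolding mgt1_def LE_def by (auto simp: mdiv_def fund_def)
  next
    fix s assume "mdiv \<gamma> (fund p) s \<noteq> 0"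
    hence "s = p \<or> \<gamma> s \<noteq> 0" by (auto simp: mdiv_def fund_def split: if_splits)
    thus "s \<le> q" using le_LF[OF \<gamma>(2,4)] LF\<gamma> pq by auto
  qed
  \<comment> \<open>\<open>\<gamma>\<^sup>-\<^sup>1 \<theta>\<^sub>q = \<theta>\<^sub>p\<close>, so HD2 for \<open>\<gamma>\<^sup>-\<^sup>1 \<preceq> p\<^sup>-\<^sup>1\<close> gives \<open>\<theta>\<^sub>p \<preceq> p\<^sup>-\<^sup>1 \<theta>\<^sub>p\<close>\<close>
  hence "mle (minv \<gamma>) (minv (fund p))"
    unfolding mle_def mdiv_minv_minv by simp
  from mmul_theta_LF_mono[OF value_group_minv[OF value_group \<gamma>(1)]
      value_group_minv[OF value_group value_group_fund[OF value_group]] _ _ this]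
  have "mle (mmul (minv \<gamma>) (theta d q)) (mmul (minv (fund p)) (theta d p))"
    using \<gamma>(4) fund_ne_mone[of p] by (simp add: minv_eq_mone_iff LF_minv LF\<gamma> LF_fund)
  moreover have "mdiv (mmul (minv \<gamma>) (theta d q)) (mmul (minv (fund p)) (theta d p)) = fund p"
    unfolding \<gamma>_def by (auto simp: mdiv_def mmul_def minv_def)
  ultimately show False using mle_imp_not_mgt1 mgt1_fund by metis
qed

lemma theta_ratio_coeff_eq_zero:
  assumes "p < q" "q \<le> r"
  shows "mdiv (theta d q) (theta d p) r = 0"
proof (rule ccontr)
  define \<gamma> where "\<gamma> = mdiv (theta d q) (theta d p)"
  have \<gamma>: "\<gamma> \<in> Hahn" "\<gamma> \<noteq> mone"
    using value_group_Hahn[OF value_group value_group_mdiv[OF value_group theta_in_group theta_in_group]]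
      theta_strict_mono[OF assms(1)] unfolding \<gamma>_def mgt1_def by auto
  assume "mdiv (theta d q) (theta d p) r \<noteq> 0"
  hence "r \<le> LF \<gamma>" using le_LF[OF \<gamma>] unfolding \<gamma>_def by blast
  moreover have "LF \<gamma> < q"
    using LF_theta_ratio_le[OF assms(1)] LF_theta_ratio_ne[OF assms(1)] unfolding \<gamma>_def by simp
  ultimately show False using assms(2) by simp
qed

end

section \<open>The fundamental monomial \<open>\<psi>\<^sub>\<alpha>\<close>\<close>

definition is_psi :: "('p::linorder ser \<Rightarrow> 'p ser) \<Rightarrow> 'p mon \<Rightarrow> 'p \<Rightarrow> bool" where
  "is_psi d \<alpha> \<psi> \<longleftrightarrow> mdiv \<alpha> (theta d \<psi>) \<noteq> mone \<and> LF (mdiv \<alpha> (theta d \<psi>)) = \<psi>"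

context hardy_derivation
begin

lemma mdiv_theta_in_Hahn: "\<alpha> \<in> \<Gamma> \<Longrightarrow> mdiv \<alpha> (theta d p) \<in> Hahn"
  using value_group_Hahn[OF value_group value_group_mdiv[OF value_group _ theta_in_group]] .

lemma mdiv_theta_coeff_eq:
  assumes "p < q" "q \<le> r"
  shows "mdiv \<alpha> (theta d p) r = mdiv \<alpha> (theta d q) r"
  using theta_ratio_coeff_eq_zero[OF assms] by (simp add: mdiv_def)

lemma is_psi_unique:
  assumes "\<alpha> \<in> \<Gamma>" "is_psi d \<alpha> p" "is_psi d \<alpha> q"
  shows "p = q"
proof -
  have False if "p' < q'" "is_psi d \<alpha> p'" "is_psi d \<alpha> q'" for p' q'
  proof -
    have "mdiv \<alpha> (theta d q') q' \<noteq> 0"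
      using LF_nonzero[OF mdiv_theta_in_Hahn[OF assms(1)]] that(3) unfolding is_psi_def by metis
    hence "mdiv \<alpha> (theta d p') q' \<noteq> 0" using mdiv_theta_coeff_eq[OF that(1) order_refl] by simp
    hence "q' \<le> p'"
      using le_LF[OF mdiv_theta_in_Hahn[OF assms(1)]] that(2) unfolding is_psi_def by metis
    thus False using that(1) by simp
  qed
  thus ?thesis using assms(2,3) by (metis linorder_neq_iff)
qed

context
  fixes \<alpha> :: "'p mon"
  assumes \<alpha>: "\<alpha> \<in> \<Gamma>" and no_psi: "\<And>p. \<not> is_psi d \<alpha> p"
begin

lemma LF_mdiv_theta_less_if_no_psi:
  assumes ne: "mdiv \<alpha> (theta d p) \<noteq> mone"
  shows "LF (mdiv \<alpha> (theta d p)) < p"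
proof (rule ccontr)
  define l where "l = LF (mdiv \<alpha> (theta d p))"
  assume "\<not> LF (mdiv \<alpha> (theta d p)) < p"
  moreover have "l \<noteq> p" using no_psi[of p] ne unfolding l_def is_psi_def by blast
  ultimately have pl: "p < l" unfolding l_def by simp
  have "mdiv \<alpha> (theta d l) l \<noteq> 0"
    using LF_nonzero[OF mdiv_theta_in_Hahn[OF \<alpha>] ne] mdiv_theta_coeff_eq[OF pl order_refl]
    unfolding l_def by simp
  moreover from this have ne_l: "mdiv \<alpha> (theta d l) \<noteq> mone" by (auto simp: mone_def)
  ultimately have "l \<le> LF (mdiv \<alpha> (theta d l))" using le_LF[OF mdiv_theta_in_Hahn[OF \<alpha>]] by blast
  moreover have "LF (mdiv \<alpha> (theta d l)) \<noteq> l" using no_psi[of l] ne_l unfolding is_psi_def by blast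
  ultimately have lk: "l < LF (mdiv \<alpha> (theta d l))" by simp
  have "mdiv \<alpha> (theta d p) (LF (mdiv \<alpha> (theta d l))) \<noteq> 0"
    using LF_nonzero[OF mdiv_theta_in_Hahn[OF \<alpha>] ne_l] mdiv_theta_coeff_eq[OF pl less_imp_le[OF lk]]
    by simp
  hence "LF (mdiv \<alpha> (theta d l)) \<le> l"
    using le_LF[OF mdiv_theta_in_Hahn[OF \<alpha>] ne] unfolding l_def by blast
  thus False using lk by simp
qed

lemma mdiv_theta_coeff_zero_if_no_psi:
  assumes "p \<le> r"
  shows "mdiv \<alpha> (theta d p) r = 0"
proof (cases "mdiv \<alpha> (theta d p) = mone")
  case False
  have "\<not> r \<le> LF (mdiv \<alpha> (theta d p))"
    using LF_mdiv_theta_less_if_no_psi[OF False] assms by simp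
  thus ?thesis using le_LF[OF mdiv_theta_in_Hahn[OF \<alpha>] False] by blast
qed (simp add: mone_def)

lemma not_mgt1_mdiv_theta_if_no_psi: "\<not> mgt1 (mdiv \<alpha> (theta d p))"
proof
  assume gt: "mgt1 (mdiv \<alpha> (theta d p))"
  define c where "c = LF (mdiv \<alpha> (theta d p))"
  have cp: "c < p" using LF_mdiv_theta_less_if_no_psi gt unfolding c_def mgt1_def by blast
  have Hahn: "mdiv \<alpha> (theta d p) \<in> Hahn" "mdiv (theta d p) (theta d c) \<in> Hahn"
    using mdiv_theta_in_Hahn[OF \<alpha>] value_group_Hahn[OF value_group
        value_group_mdiv[OF value_group theta_in_group theta_in_group]] by auto
  note factor = mdiv_eq_mmul_mdiv[of \<alpha> "theta d c" "theta d p"]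
  have "mgt1 (mdiv \<alpha> (theta d c))" "c \<le> LF (mdiv \<alpha> (theta d c))"
    unfolding factor using mgt1_mmul[OF Hahn gt theta_strict_mono[OF cp]]
      LF_mmul_mgt1[OF Hahn gt theta_strict_mono[OF cp]] by (simp_all add: c_def)
  thus False
    using LF_mdiv_theta_less_if_no_psi[of c] by (auto simp: mgt1_def)
qed

lemma mle_theta_if_no_psi: "mle \<alpha> (theta d p)"
proof (cases "\<alpha> = theta d p")
  case False
  hence "mdiv \<alpha> (theta d p) \<noteq> mone" by (simp add: mdiv_eq_mone_iff)
  hence "mgt1 (minv (mdiv \<alpha> (theta d p)))"
    using mgt1_or_mgt1_minv[OF mdiv_theta_in_Hahn[OF \<alpha>]] not_mgt1_mdiv_theta_if_no_psi by blast
  thus ?thesis unfolding mle_def minv_mdiv by simp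
qed (simp add: mle_refl)

lemma greatest_lower_bound_if_no_psi:
  assumes s: "s \<in> \<Gamma>" "\<And>p. mle s (theta d p)"
  shows "mle s \<alpha>"
proof (rule ccontr)
  define \<beta> where "\<beta> = mdiv s \<alpha>"
  assume "\<not> mle s \<alpha>"
  hence "mgt1 \<beta>" using mle_total[OF value_group s(1) \<alpha>] unfolding \<beta>_def mle_def by auto
  hence \<beta>: "\<beta> \<in> Hahn" "\<beta> \<noteq> mone" "\<beta> (LF \<beta>) > 0"
    using value_group_Hahn[OF value_group value_group_mdiv[OF value_group s(1) \<alpha>]]
    unfolding \<beta>_def mgt1_def LE_def by auto
  have "mgt1 (mmul \<beta> (mdiv \<alpha> (theta d (LF \<beta>))))"
  proof (rule mgt1I[where z = "LF \<beta>"])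
    show "mmul \<beta> (mdiv \<alpha> (theta d (LF \<beta>))) (LF \<beta>) > 0"
      using \<beta>(3) mdiv_theta_coeff_zero_if_no_psi[OF order_refl] by (simp add: mmul_def)
  next
    fix r assume "mmul \<beta> (mdiv \<alpha> (theta d (LF \<beta>))) r \<noteq> 0"
    hence "\<beta> r \<noteq> 0 \<or> mdiv \<alpha> (theta d (LF \<beta>)) r \<noteq> 0" by (auto simp: mmul_def)
    thus "r \<le> LF \<beta>"
      using le_LF[OF \<beta>(1,2)] mdiv_theta_coeff_zero_if_no_psi by (meson linorder_le_cases)
  qed
  moreover have "mdiv s (theta d (LF \<beta>)) = mmul \<beta> (mdiv \<alpha> (theta d (LF \<beta>)))"
    using mdiv_eq_mmul_mdiv[of s "theta d (LF \<beta>)" \<alpha>] unfolding \<beta>_def[symmetric] .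
  ultimately have "mgt1 (mdiv s (theta d (LF \<beta>)))" by simp
  thus False using s(2) mle_imp_not_mgt1 by blast
qed

lemma is_theta_hat_if_no_psi: "is_theta_hat \<Gamma> d \<alpha>"
  unfolding is_theta_hat_def
  using \<alpha> mle_theta_if_no_psi greatest_lower_bound_if_no_psi by blast

end

lemma is_psi_psi:
  assumes "\<alpha> \<in> \<Gamma>" "\<not> is_theta_hat \<Gamma> d \<alpha>"
  shows "is_psi d \<alpha> (psi d \<alpha>)"
proof -
  obtain p where "is_psi d \<alpha> p" using is_theta_hat_if_no_psi assms by blast
  hence "\<exists>!p. is_psi d \<alpha> p" using is_psi_unique[OF assms(1)] by blast
  hence "is_psi d \<alpha> (THE p. is_psi d \<alpha> p)" by (rule theI')
  thus ?thesis unfolding psi_def is_psi_def .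
qed

lemma LT_d_sscale_ai_mon:
  assumes "\<alpha> \<in> \<Gamma>" "\<not> is_theta_hat \<Gamma> d \<alpha>" "k \<noteq> 0"
  shows "LT (d (sscale k (ai_mon d \<alpha>))) = sscale k (smono \<alpha>)"
proof -
  define \<psi> where "\<psi> = psi d \<alpha>"
  define \<beta> where "\<beta> = mdiv \<alpha> (theta d \<psi>)"
  define c where "c = LE \<beta> * LC (d (smono (fund \<psi>)))"
  have \<beta>: "\<beta> \<in> \<Gamma>" "\<beta> \<noteq> mone" "LF \<beta> = \<psi>"
    using is_psi_psi[OF assms(1,2)] value_group_mdiv[OF value_group assms(1) theta_in_group]
    unfolding \<beta>_def \<psi>_def is_psi_def by auto
  have "LE \<beta> \<noteq> 0"
    using LF_nonzero[OF value_group_Hahn[OF value_group \<beta>(1)] \<beta>(2)] by (simp add: LE_def)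
  hence "c \<noteq> 0" unfolding c_def using LC_d_smono_fund_ne_zero by simp
  have "ai_mon d \<alpha> = sscale (1 / c) (smono \<beta>)"
    unfolding ai_mon_def Let_def c_def \<beta>_def \<psi>_def theta_def ..
  hence "LT (d (sscale k (ai_mon d \<alpha>))) = sscale (k * (1 / c)) (LT (d (smono \<beta>)))"
    using \<open>c \<noteq> 0\<close> assms(3) by (simp add: sscale_sscale d_sscale_smono[OF \<beta>(1)] LT_sscale)
  also have "\<dots> = sscale k (smono \<alpha>)"
    unfolding LT_d_smono[OF \<beta>(1,2)] \<beta>(3) c_def[symmetric] sscale_sscale
    using \<open>c \<noteq> 0\<close> by (simp add: \<beta>_def mmul_mdiv_cancel)
  finally show ?thesis .
qed

end

theorem mainTheorem5:
  fixes \<Gamma> :: "'p::linorder mon set" and d :: "'p ser \<Rightarrow> 'p ser" and a :: "'p ser"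
  assumes "value_group \<Gamma>"
    and "hardy_series_derivation \<Gamma> d"
    and "a \<in> KK \<Gamma>" and "a \<noteq> szero"
    and "\<not> (\<exists>t. is_theta_hat \<Gamma> d t \<and> LM a = t)"
  shows "LT (d (ai_mon d (LM a))) = smono (LM a) \<and>
         LT (d (sscale (LC a) (ai_mon d (LM a)))) = LT a"
proof -
  interpret hardy_derivation \<Gamma> d using assms(1,2) by unfold_locales
  have \<alpha>: "LM a \<in> \<Gamma>" "\<not> is_theta_hat \<Gamma> d (LM a)"
    using LM_in_group[OF assms(3,4)] assms(5) by auto
  have "LC a \<noteq> 0" unfolding LC_def using LM_nonzero[OF assms(3,4)] .
  show ?thesis
    using LT_d_sscale_ai_mon[OF \<alpha>, of 1] LT_d_sscale_ai_mon[OF \<alpha> \<open>LC a \<noteq> 0\<close>]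
    by (simp add: sscale_one LT_eq_sscale_smono[of a])
qed

end
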